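(* Let $k$ be a positive rational with $k<3$ and $\varepsilon$ a positive real with $\varepsilon\ge\frac{1}{k+\varepsilon}$. If $G$ is a fractionally $k$-colorable graph and $W\subseteq V(G)$ is a set of vertices at pairwise distance at least six, then every fractional $(k+\varepsilon)$-precoloring of $W$ extends to a fractional $(k+\varepsilon)$-coloring of $G$.
   Context: A fractional $m$-coloring of a graph (real $m>0$) assigns to each vertex a measurable subset of $[0,m)$ of Lebesgue measure one so that adjacent vertices receive disjoint sets; a graph is fractionally $k$-colorable if it has a fractional $k$-coloring. A fractional $m$-precoloring of a vertex set $W$ assigns measurable subsets of $[0,m)$ of measure one to the vertices of $W$; it extends if some fractional $m$-coloring of the whole graph agrees with it on $W$. Graphs are finite. *)

theory Defs
  imports "HOL-Analysis.Analysis"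
begin

definition graph :: "'a set \<Rightarrow> ('a \<Rightarrow> 'a \<Rightarrow> bool) \<Rightarrow> bool" where
  "graph V E \<longleftrightarrow> finite V \<and> (\<forall>u v. E u v \<longrightarrow> u \<in> V \<and> v \<in> V)
     \<and> (\<forall>u v. E u v \<longrightarrow> E v u) \<and> (\<forall>u. \<not> E u u)"

fun walk :: "('a \<Rightarrow> 'a \<Rightarrow> bool) \<Rightarrow> nat \<Rightarrow> 'a \<Rightarrow> 'a \<Rightarrow> bool" where
  "walk E 0 u v = (u = v)"
| "walk E (Suc n) u v = (\<exists>w. E u w \<and> walk E n w v)"

definition dist_ge :: "('a \<Rightarrow> 'a \<Rightarrow> bool) \<Rightarrow> nat \<Rightarrow> 'a \<Rightarrow> 'a \<Rightarrow> bool" where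
  "dist_ge E d u v \<longleftrightarrow> (\<forall>n<d. \<not> walk E n u v)"

definition frac_color_set :: "real \<Rightarrow> real set \<Rightarrow> bool" where
  "frac_color_set m S \<longleftrightarrow> S \<in> sets lebesgue \<and> S \<subseteq> {0..<m} \<and> emeasure lebesgue S = 1"

definition fractional_coloring ::
  "'a set \<Rightarrow> ('a \<Rightarrow> 'a \<Rightarrow> bool) \<Rightarrow> real \<Rightarrow> ('a \<Rightarrow> real set) \<Rightarrow> bool" where
  "fractional_coloring V E m f \<longleftrightarrow>
     (\<forall>v\<in>V. frac_color_set m (f v)) \<and> (\<forall>u v. E u v \<longrightarrow> f u \<inter> f v = {})"

definition fractionally_colorable :: "'a set \<Rightarrow> ('a \<Rightarrow> 'a \<Rightarrow> bool) \<Rightarrow> real \<Rightarrow> bool" where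
  "fractionally_colorable V E m \<longleftrightarrow> (\<exists>f. fractional_coloring V E m f)"

definition fractional_precoloring :: "'a set \<Rightarrow> real \<Rightarrow> ('a \<Rightarrow> real set) \<Rightarrow> bool" where
  "fractional_precoloring W m p \<longleftrightarrow> (\<forall>w\<in>W. frac_color_set m (p w))"

definition precoloring_extends ::
  "'a set \<Rightarrow> ('a \<Rightarrow> 'a \<Rightarrow> bool) \<Rightarrow> real \<Rightarrow> 'a set \<Rightarrow> ('a \<Rightarrow> real set) \<Rightarrow> bool" where
  "precoloring_extends V E m W p \<longleftrightarrow>
     (\<exists>f. fractional_coloring V E m f \<and> (\<forall>w\<in>W. f w = p w))"

end

theory Submission
  imports Defs
begin

text \<open>
  Let f be a fractional k-colouring of G.  For every independent set T let \<mu> T be the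
  measure of the colours in [0,k) used by f exactly on T; then the \<mu> T sum to k, and to one over the
  independent sets containing a fixed vertex.  Split [0,m), m = k + \<epsilon>, into disjoint layers L_T of
  measure \<mu> T and a spare layer of measure \<epsilon>, each independent of the precolouring p (every p w meets
  each layer in the fraction 1/m of it).  A vertex at distance at least three from W gets the union
  of the layers L_T with T \<ni> v, a precoloured vertex w keeps p w, a neighbour v of w gets these layers
  minus p w together with the spare layer minus p w and exported pieces of the layers of w, and a
  vertex at distance two from w gets its layers with the exported pieces exchanged for pieces of the
  spare layer inside p w.  Since precoloured vertices are at distance at least six, every vertex has
  at most one precoloured vertex within distance two, and since k < 3 the graph is triangle-free.
  Every vertex receives measure at least one (this uses \<epsilon> \<ge> 1/m) and adjacent vertices receive
  disjoint sets; shrinking to measure one yields the extension.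
\<close>

lemma lmeasurable_in_interval:
  assumes "A \<in> sets lebesgue" "A \<subseteq> {a..b::real}"
  shows "A \<in> lmeasurable"
  by (rule fmeasurableI2[of "{a..b}"]) (use assms in auto)

lemma measure_disjoint_Un:
  assumes "A \<in> fmeasurable M" "B \<in> fmeasurable M" "A \<inter> B = {}"
  shows "measure M (A \<union> B) = measure M A + measure M B"
  using assms by (intro measure_Union) (auto dest: fmeasurableD2)

lemma measure_disjoint_UN:
  assumes "finite I" "\<And>i. i \<in> I \<Longrightarrow> A i \<in> sets lebesgue" "\<And>i. i \<in> I \<Longrightarrow> A i \<subseteq> {a..b::real}"
    and "disjoint_family_on A I"
  shows "measure lebesgue (\<Union>i\<in>I. A i) = (\<Sum>i\<in>I. measure lebesgue (A i))"
proof (rule measure_finite_Union)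
  show "emeasure lebesgue (A i) \<noteq> \<infinity>" if "i \<in> I" for i
    using fmeasurableD2[OF lmeasurable_in_interval[OF assms(2,3)[OF that]]] by simp
qed (use assms in auto)

text \<open>The function x \<mapsto> |A \<inter> (-\<infinity>,x]| is 1-Lipschitz, so the
  intermediate value theorem applies.\<close>
lemma lebesgue_subset_of_measure:
  assumes A: "A \<in> sets lebesgue" "A \<subseteq> {a..b::real}" and c: "0 \<le> c" "c \<le> measure lebesgue A"
  shows "\<exists>B \<subseteq> A. B \<in> sets lebesgue \<and> measure lebesgue B = c"
proof (cases "A = {}")
  case True
  then show ?thesis using c by (intro exI[of _ "{}"]) auto
next
  case False
  define h where "h x = measure lebesgue (A \<inter> {..x})" for x
  have A_lm: "A \<in> lmeasurable" using lmeasurable_in_interval[OF A] .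
  have h_step: "h u \<le> h v \<and> h v - h u \<le> v - u" if "u \<le> v" for u v
  proof -
    have "A \<inter> {..v} = (A \<inter> {..u}) \<union> (A \<inter> {u<..v})" using that by auto
    then have "h v = h u + measure lebesgue (A \<inter> {u<..v})"
      unfolding h_def using A_lm by (auto intro!: measure_disjoint_Un fmeasurable_Int_fmeasurable)
    moreover have "measure lebesgue (A \<inter> {u<..v}) \<le> measure lebesgue {u..v}"
      using A(1) by (intro measure_mono_fmeasurable) auto
    ultimately show ?thesis using that by simp
  qed
  have "lipschitz_on 1 {a-1..b} h"
  proof (rule lipschitz_onI)
    show "dist (h x) (h y) \<le> 1 * dist x y" for x y
      using h_step[of x y] h_step[of y x] by (cases "x \<le> y") (auto simp: dist_real_def)
  qed simp
  then have h_cont: "continuous_on {a-1..b} h" by (rule lipschitz_on_continuous_on)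
  have "A \<inter> {..a-1} = {}" "A \<inter> {..b} = A" using A(2) by auto
  then have h_ends: "h (a-1) = 0" "h b = measure lebesgue A" unfolding h_def by simp_all
  have "a - 1 \<le> b" using A(2) False by force
  then obtain x where "h x = c" using IVT'[of h "a-1" c b] h_cont h_ends c by auto
  then show ?thesis using A(1) unfolding h_def by (intro exI[of _ "A \<inter> {..x}"]) auto
qed

lemma lebesgue_disjoint_subsets_of_measures:
  assumes "finite J" "A \<in> sets lebesgue" "A \<subseteq> {a..b::real}" "\<forall>j\<in>J. 0 \<le> c j" "sum c J \<le> measure lebesgue A"
  shows "\<exists>D. (\<forall>j\<in>J. D j \<subseteq> A \<and> D j \<in> sets lebesgue \<and> measure lebesgue (D j) = c j) \<and> disjoint_family_on D J"
  using assms
proof (induction J arbitrary: A rule: finite_induct)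
  case empty
  then show ?case by (auto simp: disjoint_family_on_def)
next
  case (insert j J)
  have "0 \<le> c j" "c j \<le> measure lebesgue A"
    using insert.prems insert.hyps sum_nonneg[of J c] by auto
  then obtain B where B: "B \<subseteq> A" "B \<in> sets lebesgue" "measure lebesgue B = c j"
    using lebesgue_subset_of_measure[OF insert.prems(1,2)] by blast
  have "measure lebesgue (A - B) = measure lebesgue A - c j"
    using lmeasurable_in_interval[OF insert.prems(1,2)] B by (simp add: measurable_measure_Diff)
  then have sum_J: "sum c J \<le> measure lebesgue (A - B)"
    using insert.prems insert.hyps by simp
  have "A - B \<in> sets lebesgue" "A - B \<subseteq> {a..b}" "\<forall>i\<in>J. 0 \<le> c i"
    using insert.prems B by auto
  from insert.IH[OF this sum_J] obtain D
    where D: "\<forall>i\<in>J. D i \<subseteq> A - B \<and> D i \<in> sets lebesgue \<and> measure lebesgue (D i) = c i"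
      "disjoint_family_on D J"
    by blast
  show ?case
  proof (intro exI conjI)
    show "\<forall>i\<in>insert j J. (D(j := B)) i \<subseteq> A \<and> (D(j := B)) i \<in> sets lebesgue \<and> measure lebesgue ((D(j := B)) i) = c i"
      using D(1) B by auto
    have "disjoint_family_on (D(j := B)) J"
      using D(2) insert.hyps(2) unfolding disjoint_family_on_def by auto
    moreover have "B \<inter> (\<Union>i\<in>J. (D(j := B)) i) = {}"
      using D(1) insert.hyps(2) by auto
    ultimately show "disjoint_family_on (D(j := B)) (insert j J)"
      using insert.hyps(2) by (simp add: disjoint_family_on_insert)
  qed
qed

definition venn_region :: "'b set \<Rightarrow> 'x set \<Rightarrow> ('x \<Rightarrow> 'b set) \<Rightarrow> 'x set \<Rightarrow> 'b set" where
  "venn_region \<Omega> X P S = {t \<in> \<Omega>. {x \<in> X. t \<in> P x} = S}"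

lemma UN_venn_region: "(\<Union>S\<in>\<Phi>. venn_region \<Omega> X P S) = {t \<in> \<Omega>. {x \<in> X. t \<in> P x} \<in> \<Phi>}"
  unfolding venn_region_def by auto

lemma venn_region_disjoint: "disjoint_family_on (venn_region \<Omega> X P) \<Phi>"
  unfolding venn_region_def disjoint_family_on_def by auto

lemma venn_region_sets:
  assumes "finite X" "\<Omega> \<in> sets M" "\<forall>x\<in>X. P x \<in> sets M"
  shows "venn_region \<Omega> X P S \<in> sets M"
proof (cases "S \<subseteq> X")
  case True
  then have "venn_region \<Omega> X P S = \<Omega> - (\<Union>x\<in>X. if x \<in> S then \<Omega> - P x else P x)"
    unfolding venn_region_def by auto
  also have "\<dots> \<in> sets M" using assms by (intro sets.Diff sets.finite_UN) auto
  finally show ?thesis .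
next
  case False
  then have "venn_region \<Omega> X P S = {}" unfolding venn_region_def by auto
  then show ?thesis by simp
qed

lemma measure_venn_regions:
  assumes "finite X" "\<Omega> \<in> sets lebesgue" "\<Omega> \<subseteq> {a..b::real}" "\<forall>x\<in>X. P x \<in> sets lebesgue" "\<Phi> \<subseteq> Pow X"
  shows "measure lebesgue {t \<in> \<Omega>. {x \<in> X. t \<in> P x} \<in> \<Phi>} = (\<Sum>S\<in>\<Phi>. measure lebesgue (venn_region \<Omega> X P S))"
  unfolding UN_venn_region[symmetric]
proof (rule measure_disjoint_UN)
  show "finite \<Phi>" using assms(1,5) finite_subset by blast
  show "venn_region \<Omega> X P S \<subseteq> {a..b}" for S using assms(3) unfolding venn_region_def by auto
  show "venn_region \<Omega> X P S \<in> sets lebesgue" for S using venn_region_sets assms(1,2,4) .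
qed (rule venn_region_disjoint)

lemma venn_regions_proportional_split:
  fixes P :: "'x \<Rightarrow> real set" and c :: "'j \<Rightarrow> real"
  assumes X: "finite X" "\<forall>x\<in>X. P x \<in> sets lebesgue" and \<Omega>: "\<Omega> \<in> sets lebesgue" "\<Omega> \<subseteq> {a..b}"
    and J: "finite J" "\<forall>j\<in>J. 0 \<le> c j" "sum c J = 1"
  obtains D where "\<And>S j. j \<in> J \<Longrightarrow> D S j \<subseteq> venn_region \<Omega> X P S"
    and "\<And>S j. j \<in> J \<Longrightarrow> D S j \<in> sets lebesgue"
    and "\<And>S j. j \<in> J \<Longrightarrow> measure lebesgue (D S j) = c j * measure lebesgue (venn_region \<Omega> X P S)"
    and "\<And>S S' j j'. j \<in> J \<Longrightarrow> j' \<in> J \<Longrightarrow> (S, j) \<noteq> (S', j') \<Longrightarrow> D S j \<inter> D S' j' = {}"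
proof -
  let ?R = "venn_region \<Omega> X P"
  have R: "?R S \<in> sets lebesgue" "?R S \<subseteq> {a..b}" for S
    using venn_region_sets[OF X(1) \<Omega>(1) X(2)] \<Omega>(2) unfolding venn_region_def by auto
  have "\<forall>S. \<exists>D. (\<forall>j\<in>J. D j \<subseteq> ?R S \<and> D j \<in> sets lebesgue
      \<and> measure lebesgue (D j) = c j * measure lebesgue (?R S)) \<and> disjoint_family_on D J"
    using lebesgue_disjoint_subsets_of_measures[OF J(1) R] J(2,3)
    by (simp add: sum_distrib_right[symmetric])
  from choice[OF this] obtain D where D: "\<forall>S. (\<forall>j\<in>J. D S j \<subseteq> ?R S \<and> D S j \<in> sets lebesgue
      \<and> measure lebesgue (D S j) = c j * measure lebesgue (?R S)) \<and> disjoint_family_on (D S) J" ..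
  have disj: "D S j \<inter> D S' j' = {}" if "j \<in> J" "j' \<in> J" "(S, j) \<noteq> (S', j')" for S S' j j'
  proof (cases "S = S'")
    case True
    then show ?thesis using D that unfolding disjoint_family_on_def by auto
  next
    case False
    have "D S j \<subseteq> ?R S" "D S' j' \<subseteq> ?R S'" using D that(1,2) by blast+
    then show ?thesis using False unfolding venn_region_def by blast
  qed
  show thesis by (rule that[of D]) (use D disj in auto)
qed

text \<open>The layer L j collects
  the j-th pieces of the proportional splitting of all Venn regions.\<close>
lemma lebesgue_independent_partition:
  fixes P :: "'x \<Rightarrow> real set" and c :: "'j \<Rightarrow> real"
  assumes X: "finite X" "\<forall>x\<in>X. P x \<in> sets lebesgue" and \<Omega>: "\<Omega> \<in> sets lebesgue" "\<Omega> \<subseteq> {a..b}"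
    and J: "finite J" "\<forall>j\<in>J. 0 \<le> c j" "sum c J = 1"
  shows "\<exists>L. (\<forall>j\<in>J. L j \<in> sets lebesgue \<and> L j \<subseteq> \<Omega>) \<and> disjoint_family_on L J
    \<and> (\<forall>j\<in>J. measure lebesgue (L j) = c j * measure lebesgue \<Omega>)
    \<and> (\<forall>j\<in>J. \<forall>x\<in>X. measure lebesgue (L j \<inter> P x) = c j * measure lebesgue (\<Omega> \<inter> P x))"
proof -
  let ?R = "venn_region \<Omega> X P"
  obtain D where D_sub: "\<And>S j. j \<in> J \<Longrightarrow> D S j \<subseteq> ?R S"
    and D_sets: "\<And>S j. j \<in> J \<Longrightarrow> D S j \<in> sets lebesgue"
    and D_measure: "\<And>S j. j \<in> J \<Longrightarrow> measure lebesgue (D S j) = c j * measure lebesgue (?R S)"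
    and D_disj: "\<And>S S' j j'. j \<in> J \<Longrightarrow> j' \<in> J \<Longrightarrow> (S, j) \<noteq> (S', j') \<Longrightarrow> D S j \<inter> D S' j' = {}"
    using venn_regions_proportional_split[OF X \<Omega> J] by blast
  have R_sub: "?R S \<subseteq> {a..b}" for S using \<Omega>(2) unfolding venn_region_def by blast
  define L where "L j = (\<Union>S\<in>Pow X. D S j)" for j
  have L_pattern: "{t \<in> L j. {x \<in> X. t \<in> P x} \<in> \<Phi>} = (\<Union>S\<in>\<Phi>. D S j)" if "\<Phi> \<subseteq> Pow X" "j \<in> J" for \<Phi> j
    using D_sub[OF that(2)] that unfolding L_def venn_region_def by blast
  have measure_L_pattern: "measure lebesgue {t \<in> L j. {x \<in> X. t \<in> P x} \<in> \<Phi>}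
      = c j * measure lebesgue {t \<in> \<Omega>. {x \<in> X. t \<in> P x} \<in> \<Phi>}" if "\<Phi> \<subseteq> Pow X" "j \<in> J" for \<Phi> j
  proof -
    have "measure lebesgue (\<Union>S\<in>\<Phi>. D S j) = (\<Sum>S\<in>\<Phi>. measure lebesgue (D S j))"
    proof (rule measure_disjoint_UN)
      show "finite \<Phi>" using X(1) that(1) finite_subset by blast
      show "D S j \<subseteq> {a..b}" for S using D_sub[OF that(2)] R_sub by blast
      show "disjoint_family_on (\<lambda>S. D S j) \<Phi>"
        using D_disj that(2) unfolding disjoint_family_on_def by blast
    qed (use D_sets that(2) in blast)
    also have "\<dots> = c j * (\<Sum>S\<in>\<Phi>. measure lebesgue (?R S))"
      using D_measure[OF that(2)] by (simp add: sum_distrib_left)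
    finally show ?thesis
      using L_pattern[OF that] measure_venn_regions[OF X(1) \<Omega> X(2) that(1)] by simp
  qed
  show ?thesis
  proof (intro exI conjI ballI)
    fix j assume j: "j \<in> J"
    show "L j \<in> sets lebesgue" "L j \<subseteq> \<Omega>"
      using D_sets[OF j] D_sub[OF j] X(1) unfolding L_def venn_region_def by auto
    show "measure lebesgue (L j) = c j * measure lebesgue \<Omega>"
      using measure_L_pattern[of "Pow X" j] j by simp
    fix x assume x: "x \<in> X"
    have "L j \<inter> P x = {t \<in> L j. {y \<in> X. t \<in> P y} \<in> {S \<in> Pow X. x \<in> S}}"
      "\<Omega> \<inter> P x = {t \<in> \<Omega>. {y \<in> X. t \<in> P y} \<in> {S \<in> Pow X. x \<in> S}}" using x by auto
    moreover have "{S \<in> Pow X. x \<in> S} \<subseteq> Pow X" by blast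
    ultimately show "measure lebesgue (L j \<inter> P x) = c j * measure lebesgue (\<Omega> \<inter> P x)"
      using measure_L_pattern[OF _ j] by presburger
  next
    show "disjoint_family_on L J"
      using D_disj unfolding L_def disjoint_family_on_def by blast
  qed
qed

lemma frac_color_setD:
  assumes "frac_color_set m S"
  shows "S \<in> lmeasurable" "S \<subseteq> {0..m}" "measure lebesgue S = 1" "1 \<le> m"
proof -
  from assms have S: "S \<in> sets lebesgue" "S \<subseteq> {0..<m}" "emeasure lebesgue S = 1"
    unfolding frac_color_set_def by auto
  show sub: "S \<subseteq> {0..m}" using S(2) by auto
  show "S \<in> lmeasurable" using lmeasurable_in_interval[OF S(1) sub] .
  show one: "measure lebesgue S = 1" using S(3) by (simp add: measure_def)
  have "S \<noteq> {}" using S(3) by auto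
  then have "0 \<le> m" using S(2) by auto
  have "measure lebesgue S \<le> measure lebesgue {0..m}"
    using S(1) sub by (intro measure_mono_fmeasurable) auto
  then show "1 \<le> m" using one \<open>0 \<le> m\<close> by simp
qed

lemma fractional_coloringD:
  assumes "fractional_coloring V E m f"
  shows "v \<in> V \<Longrightarrow> frac_color_set m (f v)" and "E u w \<Longrightarrow> f u \<inter> f w = {}"
  using assms unfolding fractional_coloring_def by auto

text \<open>Three pairwise disjoint sets of measure one do not fit into [0,m) when m < 3, so a fractionally
  m-colourable graph with m < 3 has no triangle.\<close>
lemma fractional_coloring_triangle_free:
  assumes f: "fractional_coloring V E m f" and "m < 3" and V: "a \<in> V" "b \<in> V" "c \<in> V"
    and E: "E a b" "E b c" "E a c"
  shows False
proof -
  note Sa = frac_color_setD[OF fractional_coloringD(1)[OF f V(1)]]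
    and Sb = frac_color_setD[OF fractional_coloringD(1)[OF f V(2)]]
    and Sc = frac_color_setD[OF fractional_coloringD(1)[OF f V(3)]]
  have disj: "f a \<inter> f b = {}" "(f a \<union> f b) \<inter> f c = {}"
    using fractional_coloringD(2)[OF f] E by auto
  have "measure lebesgue (f a \<union> f b \<union> f c) = measure lebesgue (f a \<union> f b) + measure lebesgue (f c)"
    using Sa Sb Sc disj(2) by (intro measure_disjoint_Un fmeasurable.Un) auto
  also have "\<dots> = 3" using Sa Sb Sc disj(1) by (simp add: measure_disjoint_Un)
  finally have "measure lebesgue (f a \<union> f b \<union> f c) = 3" .
  moreover have "measure lebesgue (f a \<union> f b \<union> f c) \<le> measure lebesgue {0..m}"
    using Sa Sb Sc by (intro measure_mono_fmeasurable) auto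
  ultimately show False using \<open>m < 3\<close> Sa(4) by simp
qed

definition independent_sets :: "'a set \<Rightarrow> ('a \<Rightarrow> 'a \<Rightarrow> bool) \<Rightarrow> 'a set set" where
  "independent_sets V E = {T \<in> Pow V. \<forall>x\<in>T. \<forall>y\<in>T. \<not> E x y}"

text \<open>A fractional m-colouring assigns to every independent set T the measure of the colours used exactly
  on T (its Venn region).\<close>
lemma fractional_coloring_class_weights:
  assumes V: "finite V" and f: "fractional_coloring V E m f" and m: "0 \<le> m"
  shows "(\<Sum>T\<in>independent_sets V E. measure lebesgue (venn_region {0..<m} V f T)) = m"
    and "v \<in> V \<Longrightarrow> (\<Sum>T\<in>{T \<in> independent_sets V E. v \<in> T}. measure lebesgue (venn_region {0..<m} V f T)) = 1"
proof -
  let ?\<mu> = "\<lambda>T. measure lebesgue (venn_region {0..<m} V f T)"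
  note f_set = fractional_coloringD(1)[OF f]
  have f_sets: "\<forall>v\<in>V. f v \<in> sets lebesgue" using f_set unfolding frac_color_set_def by auto
  have "venn_region {0..<m} V f T = {}" if T: "T \<in> Pow V" "T \<notin> independent_sets V E" for T
  proof -
    obtain x y where "x \<in> T" "y \<in> T" "E x y" using T unfolding independent_sets_def by blast
    then show ?thesis using fractional_coloringD(2)[OF f] unfolding venn_region_def by blast
  qed
  then have dependent_zero: "\<forall>T\<in>\<Phi> - independent_sets V E. ?\<mu> T = 0" if "\<Phi> \<subseteq> Pow V" for \<Phi>
    using that by auto
  have sum_pattern: "measure lebesgue {t \<in> {0..<m}. {x \<in> V. t \<in> f x} \<in> \<Phi>} = (\<Sum>T\<in>\<Phi> \<inter> independent_sets V E. ?\<mu> T)"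
    if "\<Phi> \<subseteq> Pow V" for \<Phi>
  proof -
    have "finite \<Phi>" using V that finite_subset by blast
    then have "(\<Sum>T\<in>\<Phi> \<inter> independent_sets V E. ?\<mu> T) = (\<Sum>T\<in>\<Phi>. ?\<mu> T)"
      using dependent_zero[OF that] by (intro sum.mono_neutral_left) auto
    moreover have "measure lebesgue {t \<in> {0..<m}. {x \<in> V. t \<in> f x} \<in> \<Phi>} = (\<Sum>T\<in>\<Phi>. ?\<mu> T)"
      by (rule measure_venn_regions[where a=0 and b=m]) (use V f_sets that in auto)
    ultimately show ?thesis by simp
  qed
  have "independent_sets V E \<subseteq> Pow V" unfolding independent_sets_def by auto
  moreover have "{t \<in> {0..<m}. {x \<in> V. t \<in> f x} \<in> Pow V} = {0..<m}" by auto
  ultimately have "(\<Sum>T\<in>independent_sets V E. ?\<mu> T) = measure lebesgue {0..<m}"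
    using sum_pattern[of "Pow V"] by (simp add: Int_absorb1)
  then show "(\<Sum>T\<in>independent_sets V E. ?\<mu> T) = m" using m by simp
  assume v: "v \<in> V"
  have "{t \<in> {0..<m}. {x \<in> V. t \<in> f x} \<in> {T \<in> Pow V. v \<in> T}} = f v"
    using v f_set[OF v] unfolding frac_color_set_def by auto
  moreover have "{T \<in> Pow V. v \<in> T} \<inter> independent_sets V E = {T \<in> independent_sets V E. v \<in> T}"
    unfolding independent_sets_def by auto
  moreover have "measure lebesgue {t \<in> {0..<m}. {x \<in> V. t \<in> f x} \<in> {T \<in> Pow V. v \<in> T}}
      = (\<Sum>T\<in>{T \<in> Pow V. v \<in> T} \<inter> independent_sets V E. ?\<mu> T)"
    by (rule sum_pattern) blast
  ultimately show "(\<Sum>T\<in>{T \<in> independent_sets V E. v \<in> T}. ?\<mu> T) = 1"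
    using frac_color_setD(3)[OF f_set[OF v]] by simp
qed

lemma walk_append: "walk E i x y \<Longrightarrow> walk E j y z \<Longrightarrow> walk E (i + j) x z"
  by (induction i arbitrary: x) auto

lemma walk_1: "walk E 1 u v \<longleftrightarrow> E u v"
  by (simp add: One_nat_def)

lemma walk_reverse:
  assumes sym: "\<And>u v. E u v \<Longrightarrow> E v u"
  shows "walk E n x y \<Longrightarrow> walk E n y x"
proof (induction n arbitrary: x)
  case (Suc n)
  then obtain w where "E x w" "walk E n w y" by auto
  then have "walk E (n + 1) y x" using Suc.IH walk_append[of E n y w 1 x] sym by auto
  then show ?case by simp
qed simp

lemma fractional_coloring_within:
  assumes g: "\<forall>v\<in>V. g v \<in> sets lebesgue \<and> g v \<subseteq> {0..<m} \<and> 1 \<le> measure lebesgue (g v)"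
    and disj: "\<forall>u v. E u v \<longrightarrow> g u \<inter> g v = {}"
  shows "\<exists>f. fractional_coloring V E m f \<and> (\<forall>v\<in>V. measure lebesgue (g v) = 1 \<longrightarrow> f v = g v)"
proof -
  have "\<forall>v\<in>V. \<exists>X \<subseteq> g v. X \<in> sets lebesgue \<and> measure lebesgue X = 1"
  proof
    fix v assume "v \<in> V"
    then have gv: "g v \<in> sets lebesgue" "g v \<subseteq> {0..<m}" "1 \<le> measure lebesgue (g v)" using g by blast+
    then have "g v \<subseteq> {0..m}" by auto
    then show "\<exists>X \<subseteq> g v. X \<in> sets lebesgue \<and> measure lebesgue X = 1"
      using lebesgue_subset_of_measure[of "g v" 0 m 1] gv by simp
  qed
  from bchoice[OF this] obtain h where h: "\<forall>v\<in>V. h v \<subseteq> g v \<and> h v \<in> sets lebesgue \<and> measure lebesgue (h v) = 1"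
    by blast
  define f where "f v = (if v \<in> V \<and> measure lebesgue (g v) \<noteq> 1 then h v else g v)" for v
  have f_sub: "f v \<subseteq> g v" for v using h unfolding f_def by simp
  have f_set: "frac_color_set m (f v)" if v: "v \<in> V" for v
  proof -
    have "h v \<in> sets lebesgue" "measure lebesgue (h v) = 1" using h v by blast+
    moreover have "g v \<in> sets lebesgue" "g v \<subseteq> {0..<m}" using g v by blast+
    moreover have "f v = (if measure lebesgue (g v) = 1 then g v else h v)" using v unfolding f_def by simp
    ultimately have f_v: "f v \<in> sets lebesgue" "f v \<subseteq> {0..<m}" "measure lebesgue (f v) = 1"
      using f_sub[of v] by (simp_all split: if_split_asm)
    have "f v \<subseteq> {0..m}" using f_v(2) by auto
    then have "f v \<in> lmeasurable" by (rule lmeasurable_in_interval[OF f_v(1)])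
    then have "emeasure lebesgue (f v) = 1" using f_v(3) by (simp add: emeasure_eq_measure2)
    then show ?thesis using f_v(1,2) unfolding frac_color_set_def by blast
  qed
  have f_disj: "f u \<inter> f v = {}" if "E u v" for u v using disj f_sub[of u] f_sub[of v] that by blast
  show ?thesis
  proof (intro exI conjI)
    show "fractional_coloring V E m f" unfolding fractional_coloring_def using f_set f_disj by blast
    show "\<forall>v\<in>V. measure lebesgue (g v) = 1 \<longrightarrow> f v = g v" unfolding f_def by simp
  qed
qed

locale precoloring_extension =
  fixes V :: "'a set" and E :: "'a \<Rightarrow> 'a \<Rightarrow> bool" and W :: "'a set"
    and k \<epsilon> :: real and p :: "'a \<Rightarrow> real set" and f :: "'a \<Rightarrow> real set"
  assumes graph: "graph V E"
    and k_pos: "0 < k" and k_less_3: "k < 3"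
    and eps_pos: "0 < \<epsilon>" and eps_large: "1 / (k + \<epsilon>) \<le> \<epsilon>"
    and coloring: "fractional_coloring V E k f"
    and W_sub: "W \<subseteq> V"
    and W_far: "\<forall>u\<in>W. \<forall>v\<in>W. u \<noteq> v \<longrightarrow> dist_ge E 6 u v"
    and precoloring: "fractional_precoloring W (k + \<epsilon>) p"
begin

abbreviation m :: real where "m \<equiv> k + \<epsilon>"

lemma m_pos: "0 < m"
  using k_pos eps_pos by simp

lemma finite_V: "finite V" and E_sym: "E u v \<Longrightarrow> E v u" and E_in_V: "E u v \<Longrightarrow> u \<in> V \<and> v \<in> V"
  and E_irrefl: "\<not> E v v"
  using graph unfolding graph_def by blast+

lemma W_walk_eq: "u \<in> W \<Longrightarrow> v \<in> W \<Longrightarrow> walk E n u v \<Longrightarrow> n < 6 \<Longrightarrow> u = v"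
  using W_far unfolding dist_ge_def by blast

definition region :: "real set \<Rightarrow> bool" where
  "region X \<longleftrightarrow> X \<in> sets lebesgue \<and> X \<subseteq> {0..<m}"

lemma region_sets: "region X \<Longrightarrow> X \<in> sets lebesgue"
  unfolding region_def by blast

lemma region_lmeasurable: "region X \<Longrightarrow> X \<in> lmeasurable"
  unfolding region_def by (rule lmeasurable_in_interval[of X 0 m]) auto

lemma region_Un: "region A \<Longrightarrow> region B \<Longrightarrow> region (A \<union> B)"
  and region_Diff: "region A \<Longrightarrow> B \<in> sets lebesgue \<Longrightarrow> region (A - B)"
  and region_Int: "region A \<Longrightarrow> B \<in> sets lebesgue \<Longrightarrow> region (A \<inter> B)"
  unfolding region_def by auto

lemma region_UN: "finite I \<Longrightarrow> (\<And>i. i \<in> I \<Longrightarrow> region (X i)) \<Longrightarrow> region (\<Union>i\<in>I. X i)"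
  unfolding region_def by (auto intro!: sets.finite_UN)

lemma measure_region_Un:
  "region A \<Longrightarrow> region B \<Longrightarrow> A \<inter> B = {} \<Longrightarrow> measure lebesgue (A \<union> B) = measure lebesgue A + measure lebesgue B"
  by (intro measure_disjoint_Un region_lmeasurable)

lemma measure_region_Diff:
  "region A \<Longrightarrow> B \<in> sets lebesgue \<Longrightarrow> B \<subseteq> A \<Longrightarrow> measure lebesgue (A - B) = measure lebesgue A - measure lebesgue B"
  by (intro measurable_measure_Diff region_lmeasurable)

lemma measure_region_UN:
  assumes "finite I" "\<And>i. i \<in> I \<Longrightarrow> region (X i)" "disjoint_family_on X I"
  shows "measure lebesgue (\<Union>i\<in>I. X i) = (\<Sum>i\<in>I. measure lebesgue (X i))"
proof (rule measure_disjoint_UN[where a=0 and b=m])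
  show "X i \<subseteq> {0..m}" if "i \<in> I" for i using assms(2)[OF that] unfolding region_def by auto
qed (use assms region_sets in auto)

lemma precoloring_region: "w \<in> W \<Longrightarrow> region (p w)"
  and measure_precoloring: "w \<in> W \<Longrightarrow> measure lebesgue (p w) = 1"
  using precoloring frac_color_setD(3) unfolding fractional_precoloring_def region_def frac_color_set_def
  by blast+

definition Ind :: "'a set set" where "Ind = independent_sets V E"

definition \<mu> :: "'a set \<Rightarrow> real" where "\<mu> T = measure lebesgue (venn_region {0..<k} V f T)"

definition classes_at :: "'a \<Rightarrow> 'a set set" where "classes_at v = {T \<in> Ind. v \<in> T}"

lemma finite_Ind: "finite Ind"
  using finite_V unfolding Ind_def independent_sets_def by auto

lemma classes_at_Ind: "T \<in> classes_at v \<Longrightarrow> T \<in> Ind"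
  unfolding classes_at_def by blast

lemma finite_classes_at: "finite (classes_at v)"
  using finite_Ind unfolding classes_at_def by auto

lemma classes_at_adjacent: "E x y \<Longrightarrow> T \<in> classes_at x \<Longrightarrow> T' \<in> classes_at y \<Longrightarrow> T \<noteq> T'"
  unfolding classes_at_def Ind_def independent_sets_def by auto

lemma sum_\<mu>: "(\<Sum>T\<in>Ind. \<mu> T) = k"
  using fractional_coloring_class_weights(1)[OF finite_V coloring] k_pos unfolding Ind_def \<mu>_def by simp

lemma sum_\<mu>_at: "v \<in> V \<Longrightarrow> (\<Sum>T\<in>classes_at v. c * \<mu> T) = c"
  using fractional_coloring_class_weights(2)[OF finite_V coloring] k_pos
  unfolding Ind_def \<mu>_def classes_at_def by (simp add: sum_distrib_left[symmetric])

text \<open>A single colour set of measure one needs k \<ge> 1.\<close>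
lemma one_le_k: "v \<in> V \<Longrightarrow> 1 \<le> k"
  using frac_color_setD(4)[OF fractional_coloringD(1)[OF coloring]] .

text \<open>The layers of [0,m): one layer of measure \<mu> T for every independent set T and a spare layer of
  measure \<epsilon>, all independent of the precolouring.  A vertex far from W will use the layers of the
  independent sets containing it, imitating the colouring f.\<close>
definition layer_index :: "'a set option set" where "layer_index = insert None (Some ` Ind)"

definition weight :: "'a set option \<Rightarrow> real" where
  "weight j = (case j of None \<Rightarrow> \<epsilon> / m | Some T \<Rightarrow> \<mu> T / m)"

definition is_layering :: "('a set option \<Rightarrow> real set) \<Rightarrow> bool" where
  "is_layering L \<longleftrightarrow> (\<forall>j\<in>layer_index. region (L j)) \<and> disjoint_family_on L layer_index
     \<and> (\<forall>j\<in>layer_index. measure lebesgue (L j) = weight j * m)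
     \<and> (\<forall>j\<in>layer_index. \<forall>w\<in>W. measure lebesgue (L j \<inter> p w) = weight j)"

text \<open>Such layers exist by lebesgue_independent_partition, since the weights add up to (\<epsilon> + k) / m = 1.\<close>
lemma layering_exists: "\<exists>L. is_layering L"
proof -
  have "sum weight layer_index = \<epsilon> / m + (\<Sum>T\<in>Ind. \<mu> T / m)"
    unfolding layer_index_def using finite_Ind
    by (simp add: sum.reindex weight_def)
  also have "\<dots> = \<epsilon> / m + k / m" using sum_\<mu> by (simp add: sum_divide_distrib[symmetric])
  also have "\<dots> = (\<epsilon> + k) / m" by (rule add_divide_distrib[symmetric])
  also have "\<dots> = 1" using m_pos by (simp add: add.commute)
  finally have sum_weight: "sum weight layer_index = 1" .
  have "\<exists>L. (\<forall>j\<in>layer_index. L j \<in> sets lebesgue \<and> L j \<subseteq> {0..<m}) \<and> disjoint_family_on L layer_index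
      \<and> (\<forall>j\<in>layer_index. measure lebesgue (L j) = weight j * measure lebesgue {0..<m})
      \<and> (\<forall>j\<in>layer_index. \<forall>w\<in>W. measure lebesgue (L j \<inter> p w) = weight j * measure lebesgue ({0..<m} \<inter> p w))"
  proof (rule lebesgue_independent_partition[where a=0 and b=m])
    show "finite W" using finite_V W_sub finite_subset by blast
    show "\<forall>w\<in>W. p w \<in> sets lebesgue" using precoloring_region region_sets by blast
    show "finite layer_index" using finite_Ind unfolding layer_index_def by simp
    show "\<forall>j\<in>layer_index. 0 \<le> weight j"
      using eps_pos m_pos unfolding layer_index_def weight_def \<mu>_def by auto
  qed (use sum_weight in auto)
  then obtain L where L: "\<forall>j\<in>layer_index. L j \<in> sets lebesgue \<and> L j \<subseteq> {0..<m}"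
    "disjoint_family_on L layer_index"
    "\<forall>j\<in>layer_index. measure lebesgue (L j) = weight j * measure lebesgue {0..<m}"
    "\<forall>j\<in>layer_index. \<forall>w\<in>W. measure lebesgue (L j \<inter> p w) = weight j * measure lebesgue ({0..<m} \<inter> p w)"
    by blast
  have "{0..<m} \<inter> p w = p w" if "w \<in> W" for w using precoloring_region[OF that] unfolding region_def by blast
  then have "is_layering L"
    using L m_pos measure_precoloring unfolding is_layering_def region_def by simp
  then show ?thesis by blast
qed

definition layers :: "'a set option \<Rightarrow> real set" where "layers = (SOME L. is_layering L)"

definition layer :: "'a set \<Rightarrow> real set" where "layer T = layers (Some T)"

definition spare :: "real set" where "spare = layers None"

lemma layers_is_layering: "is_layering layers"
  unfolding layers_def using layering_exists by (rule someI_ex)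

lemma region_layer: "T \<in> Ind \<Longrightarrow> region (layer T)"
  and region_spare: "region spare"
  and measure_layer: "T \<in> Ind \<Longrightarrow> measure lebesgue (layer T) = \<mu> T"
  and measure_spare: "measure lebesgue spare = \<epsilon>"
  and measure_layer_in: "T \<in> Ind \<Longrightarrow> w \<in> W \<Longrightarrow> measure lebesgue (layer T \<inter> p w) = \<mu> T / m"
  and measure_spare_in: "w \<in> W \<Longrightarrow> measure lebesgue (spare \<inter> p w) = \<epsilon> / m"
  using layers_is_layering m_pos unfolding is_layering_def layer_def spare_def layer_index_def weight_def by auto

lemma layer_disjoint: "T \<in> Ind \<Longrightarrow> T' \<in> Ind \<Longrightarrow> T \<noteq> T' \<Longrightarrow> layer T \<inter> layer T' = {}"
  and layer_spare_disjoint: "T \<in> Ind \<Longrightarrow> layer T \<inter> spare = {}"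
  using layers_is_layering unfolding is_layering_def disjoint_family_on_def layer_def spare_def layer_index_def
  by auto

text \<open>Near a precoloured vertex w, each layer of an independent set T \<ni> w hands over the amount
  transfer w T; the transfers add up to \<epsilon> / m, which is exactly the part of the spare layer inside p w.\<close>
definition transfer :: "'a \<Rightarrow> 'a set \<Rightarrow> real" where
  "transfer w T = (if w \<in> T then \<epsilon> / m * \<mu> T else 0)"

lemma transfer_nonneg: "0 \<le> transfer w T"
  using eps_pos m_pos unfolding transfer_def \<mu>_def by simp

lemma sum_transfer:
  assumes "w \<in> W"
  shows "(\<Sum>T\<in>Ind. transfer w T) = \<epsilon> / m"
proof -
  have "(\<Sum>T\<in>Ind. transfer w T) = (\<Sum>T\<in>classes_at w. \<epsilon> / m * \<mu> T)"
    unfolding transfer_def classes_at_def by (rule sum.inter_filter[OF finite_Ind, symmetric])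
  also have "\<dots> = \<epsilon> / m" using assms W_sub by (intro sum_\<mu>_at) blast
  finally show ?thesis .
qed

lemma measure_layer_out:
  assumes "w \<in> W" "T \<in> Ind"
  shows "measure lebesgue (layer T - p w) = (1 - 1 / m) * \<mu> T"
proof -
  have "layer T - p w = layer T - (layer T \<inter> p w)" by blast
  moreover have "layer T \<inter> p w \<in> sets lebesgue"
    using region_sets[OF region_layer[OF assms(2)]] region_sets[OF precoloring_region[OF assms(1)]] by blast
  ultimately have "measure lebesgue (layer T - p w) = measure lebesgue (layer T) - measure lebesgue (layer T \<inter> p w)"
    using measure_region_Diff[OF region_layer[OF assms(2)]] by simp
  then show ?thesis using measure_layer[OF assms(2)] measure_layer_in[OF assms(2,1)] by (simp add: algebra_simps)
qed

text \<open>The amount handed over fits into the part of the layer outside p w; this uses k \<ge> 1.\<close>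
lemma transfer_le_layer_out:
  assumes "w \<in> W" "T \<in> Ind"
  shows "transfer w T \<le> measure lebesgue (layer T - p w)"
proof -
  have "\<epsilon> \<le> m - 1" using one_le_k[of w] assms(1) W_sub by auto
  then have "\<epsilon> / m \<le> (m - 1) / m" using m_pos by (intro divide_right_mono) auto
  also have "\<dots> = 1 - 1 / m" using m_pos by (simp add: diff_divide_distrib)
  finally have "\<epsilon> / m \<le> 1 - 1 / m" .
  then have "\<epsilon> / m * \<mu> T \<le> (1 - 1 / m) * \<mu> T" unfolding \<mu>_def by (rule mult_right_mono) simp
  then show ?thesis
    using measure_layer_out[OF assms] measure_nonneg[of lebesgue "layer T - p w"] unfolding transfer_def by auto
qed

text \<open>The part of the layer of T outside p w that is given to the neighbours of w.\<close>
definition export :: "'a \<Rightarrow> 'a set \<Rightarrow> real set" where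
  "export w T = (SOME X. X \<subseteq> layer T - p w \<and> X \<in> sets lebesgue \<and> measure lebesgue X = transfer w T)"

lemma export:
  assumes "w \<in> W" "T \<in> Ind"
  shows "export w T \<subseteq> layer T - p w" "region (export w T)" "measure lebesgue (export w T) = transfer w T"
proof -
  have "layer T - p w \<in> sets lebesgue" "layer T - p w \<subseteq> {0..m}"
    using region_layer[OF assms(2)] precoloring_region[OF assms(1)] unfolding region_def by auto
  then have "\<exists>X \<subseteq> layer T - p w. X \<in> sets lebesgue \<and> measure lebesgue X = transfer w T"
    using transfer_nonneg transfer_le_layer_out[OF assms] by (intro lebesgue_subset_of_measure)
  then have X: "export w T \<subseteq> layer T - p w \<and> export w T \<in> sets lebesgue \<and> measure lebesgue (export w T) = transfer w T"
    unfolding export_def by (rule someI_ex)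
  then show "export w T \<subseteq> layer T - p w" "measure lebesgue (export w T) = transfer w T" by blast+
  show "region (export w T)" using X region_layer[OF assms(2)] unfolding region_def by blast
qed

text \<open>Disjoint parts of the spare layer inside p w replacing the exported parts for vertices at distance
  two from w.\<close>
definition compensation :: "'a \<Rightarrow> 'a set \<Rightarrow> real set" where
  "compensation w = (SOME C. (\<forall>T\<in>Ind. C T \<subseteq> spare \<inter> p w \<and> C T \<in> sets lebesgue
     \<and> measure lebesgue (C T) = transfer w T) \<and> disjoint_family_on C Ind)"

lemma compensation:
  assumes "w \<in> W"
  shows "T \<in> Ind \<Longrightarrow> compensation w T \<subseteq> spare \<inter> p w"
    and "T \<in> Ind \<Longrightarrow> region (compensation w T)"
    and "T \<in> Ind \<Longrightarrow> measure lebesgue (compensation w T) = transfer w T"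
    and "disjoint_family_on (compensation w) Ind"
proof -
  have "spare \<inter> p w \<in> sets lebesgue" "spare \<inter> p w \<subseteq> {0..m}"
    using region_spare precoloring_region[OF assms] unfolding region_def by auto
  moreover have "\<forall>T\<in>Ind. 0 \<le> transfer w T" using transfer_nonneg by blast
  moreover have "(\<Sum>T\<in>Ind. transfer w T) \<le> measure lebesgue (spare \<inter> p w)"
    using sum_transfer[OF assms] measure_spare_in[OF assms] by simp
  ultimately have "\<exists>C. (\<forall>T\<in>Ind. C T \<subseteq> spare \<inter> p w \<and> C T \<in> sets lebesgue \<and> measure lebesgue (C T) = transfer w T)
      \<and> disjoint_family_on C Ind"
    by (rule lebesgue_disjoint_subsets_of_measures[OF finite_Ind])
  then have C: "(\<forall>T\<in>Ind. compensation w T \<subseteq> spare \<inter> p w \<and> compensation w T \<in> sets lebesgue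
      \<and> measure lebesgue (compensation w T) = transfer w T) \<and> disjoint_family_on (compensation w) Ind"
    unfolding compensation_def by (rule someI_ex)
  then show "T \<in> Ind \<Longrightarrow> compensation w T \<subseteq> spare \<inter> p w"
    "T \<in> Ind \<Longrightarrow> measure lebesgue (compensation w T) = transfer w T"
    "disjoint_family_on (compensation w) Ind" by blast+
  show "T \<in> Ind \<Longrightarrow> region (compensation w T)" using C region_spare unfolding region_def by blast
qed

definition exchanged :: "'a \<Rightarrow> 'a set \<Rightarrow> real set" where
  "exchanged w T = (layer T - export w T) \<union> compensation w T"

lemma exchanged_sub: "exchanged w T \<subseteq> layer T \<union> compensation w T"
  unfolding exchanged_def by blast

lemma region_exchanged:
  assumes "w \<in> W" "T \<in> Ind"
  shows "region (exchanged w T)"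
  unfolding exchanged_def
  using region_layer[OF assms(2)] region_sets[OF export(2)[OF assms]] compensation(2)[OF assms]
  by (intro region_Un region_Diff)

lemma measure_exchanged:
  assumes "w \<in> W" "T \<in> Ind"
  shows "measure lebesgue (exchanged w T) = \<mu> T"
proof -
  have kept: "region (layer T - export w T)"
    using region_layer[OF assms(2)] region_sets[OF export(2)[OF assms]] by (rule region_Diff)
  have "(layer T - export w T) \<inter> compensation w T = {}"
    using compensation(1)[OF assms] layer_spare_disjoint[OF assms(2)] by blast
  then have "measure lebesgue (exchanged w T)
      = measure lebesgue (layer T - export w T) + measure lebesgue (compensation w T)"
    unfolding exchanged_def using kept compensation(2)[OF assms] by (rule measure_region_Un[rotated 2])
  also have "measure lebesgue (layer T - export w T) = \<mu> T - transfer w T"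
    using measure_region_Diff[OF region_layer[OF assms(2)] region_sets[OF export(2)[OF assms]]]
      export(1,3)[OF assms] measure_layer[OF assms(2)] by auto
  finally show ?thesis using compensation(3)[OF assms] by simp
qed

lemma exchanged_disjoint:
  assumes "w \<in> W" "T \<in> Ind" "T' \<in> Ind" "T \<noteq> T'"
  shows "exchanged w T \<inter> exchanged w T' = {}"
proof -
  have "compensation w T \<inter> compensation w T' = {}"
    using compensation(4)[OF assms(1)] assms(2-4) unfolding disjoint_family_on_def by blast
  moreover have "compensation w T \<subseteq> spare" "compensation w T' \<subseteq> spare"
    using compensation(1)[OF assms(1)] assms(2,3) by blast+
  ultimately show ?thesis
    using exchanged_sub[of w T] exchanged_sub[of w T'] layer_disjoint[OF assms(2-4)]
      layer_spare_disjoint[OF assms(2)] layer_spare_disjoint[OF assms(3)] by blast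
qed

definition far_colour :: "'a \<Rightarrow> real set" where
  "far_colour v = (\<Union>T\<in>classes_at v. layer T)"

definition exported :: "'a \<Rightarrow> real set" where
  "exported w = (\<Union>T\<in>classes_at w. export w T)"

definition adjacent_colour :: "'a \<Rightarrow> 'a \<Rightarrow> real set" where
  "adjacent_colour w v = ((far_colour v \<union> spare) - p w) \<union> exported w"

definition distance2_colour :: "'a \<Rightarrow> 'a \<Rightarrow> real set" where
  "distance2_colour w v = (\<Union>T\<in>classes_at v. exchanged w T)"

lemma measure_UN_classes:
  assumes "v \<in> V" "\<And>T. T \<in> classes_at v \<Longrightarrow> region (X T)"
    and "\<And>T. T \<in> classes_at v \<Longrightarrow> measure lebesgue (X T) = c * \<mu> T"
    and "\<And>T T'. T \<in> classes_at v \<Longrightarrow> T' \<in> classes_at v \<Longrightarrow> T \<noteq> T' \<Longrightarrow> X T \<inter> X T' = {}"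
  shows "measure lebesgue (\<Union>T\<in>classes_at v. X T) = c"
proof -
  have "disjoint_family_on X (classes_at v)"
    using assms(4) unfolding disjoint_family_on_def by blast
  then have "measure lebesgue (\<Union>T\<in>classes_at v. X T) = (\<Sum>T\<in>classes_at v. measure lebesgue (X T))"
    using finite_classes_at assms(2) by (intro measure_region_UN)
  also have "\<dots> = (\<Sum>T\<in>classes_at v. c * \<mu> T)" using assms(3) by simp
  finally show ?thesis using sum_\<mu>_at[OF assms(1)] by simp
qed

lemma region_far_colour: "region (far_colour v)"
  unfolding far_colour_def using finite_classes_at region_layer classes_at_Ind by (intro region_UN) auto

lemma far_colour_layer_disjoint: "T \<in> Ind \<Longrightarrow> T \<notin> classes_at v \<Longrightarrow> far_colour v \<inter> layer T = {}"
  unfolding far_colour_def using layer_disjoint classes_at_Ind by blast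

lemma far_colour_spare_disjoint: "far_colour v \<inter> spare = {}"
  unfolding far_colour_def using layer_spare_disjoint classes_at_Ind by blast

lemma measure_far_colour: "v \<in> V \<Longrightarrow> measure lebesgue (far_colour v) = 1"
  unfolding far_colour_def
  by (rule measure_UN_classes) (auto simp: region_layer measure_layer layer_disjoint classes_at_Ind)

lemma measure_far_colour_in:
  assumes "v \<in> V" "w \<in> W"
  shows "measure lebesgue (far_colour v \<inter> p w) = 1 / m"
proof -
  have "far_colour v \<inter> p w = (\<Union>T\<in>classes_at v. layer T \<inter> p w)" unfolding far_colour_def by blast
  also have "measure lebesgue \<dots> = 1 / m"
  proof (rule measure_UN_classes[OF assms(1)])
    fix T assume T: "T \<in> classes_at v"
    show "region (layer T \<inter> p w)"
      using region_layer[OF classes_at_Ind[OF T]] region_sets[OF precoloring_region[OF assms(2)]] by (rule region_Int)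
    show "measure lebesgue (layer T \<inter> p w) = 1 / m * \<mu> T"
      using measure_layer_in[OF classes_at_Ind[OF T] assms(2)] by simp
    fix T' assume "T' \<in> classes_at v" "T \<noteq> T'"
    then show "layer T \<inter> p w \<inter> (layer T' \<inter> p w) = {}" using layer_disjoint classes_at_Ind T by blast
  qed
  finally show ?thesis .
qed

lemma region_exported: "w \<in> W \<Longrightarrow> region (exported w)"
  unfolding exported_def using finite_classes_at export(2) classes_at_Ind by (intro region_UN) auto

lemma measure_exported:
  assumes w: "w \<in> W"
  shows "measure lebesgue (exported w) = \<epsilon> / m"
  unfolding exported_def
proof (rule measure_UN_classes)
  show "w \<in> V" using w W_sub by blast
  fix T assume T: "T \<in> classes_at w"
  note exp = export[OF w classes_at_Ind[OF T]]
  show "region (export w T)" using exp(2) .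
  show "measure lebesgue (export w T) = \<epsilon> / m * \<mu> T"
    using exp(3) T unfolding transfer_def classes_at_def by simp
  fix T' assume "T' \<in> classes_at w" "T \<noteq> T'"
  then show "export w T \<inter> export w T' = {}"
    using exp(1) export(1)[OF w classes_at_Ind] layer_disjoint classes_at_Ind T by blast
qed

lemma exported_avoids_precolour: "w \<in> W \<Longrightarrow> exported w \<inter> p w = {}"
  unfolding exported_def using export(1) classes_at_Ind by blast

lemma exported_disjoint_neighbour:
  assumes w: "w \<in> W" and wv: "E w v"
  shows "(far_colour v \<union> spare) \<inter> exported w = {}"
proof -
  have "far_colour v \<inter> export w T = {}" "spare \<inter> export w T = {}" if T: "T \<in> classes_at w" for T
  proof -
    have "T \<notin> classes_at v" using classes_at_adjacent[OF wv T] by blast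
    then show "far_colour v \<inter> export w T = {}" "spare \<inter> export w T = {}"
      using far_colour_layer_disjoint layer_spare_disjoint export(1)[OF w] classes_at_Ind[OF T] by blast+
  qed
  then show ?thesis unfolding exported_def by blast
qed

text \<open>Outside p w, the layers of v and the spare layer keep the fraction 1 - 1/m of their measure 1 + \<epsilon>.\<close>
lemma measure_far_spare_out:
  assumes v: "v \<in> V" and w: "w \<in> W"
  shows "measure lebesgue ((far_colour v \<union> spare) - p w) = (1 + \<epsilon>) - (1 / m + \<epsilon> / m)"
proof -
  define R where "R = far_colour v \<union> spare"
  have pw: "p w \<in> sets lebesgue" using region_sets[OF precoloring_region[OF w]] .
  have R: "region R" unfolding R_def using region_far_colour region_spare by (rule region_Un)
  have "measure lebesgue R = 1 + \<epsilon>"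
    unfolding R_def using measure_region_Un[OF region_far_colour region_spare far_colour_spare_disjoint]
      measure_far_colour[OF v] measure_spare by simp
  moreover have "measure lebesgue (R \<inter> p w) = 1 / m + \<epsilon> / m"
  proof -
    have "R \<inter> p w = (far_colour v \<inter> p w) \<union> (spare \<inter> p w)" unfolding R_def by blast
    moreover have "(far_colour v \<inter> p w) \<inter> (spare \<inter> p w) = {}" using far_colour_spare_disjoint by blast
    ultimately show ?thesis
      using measure_region_Un[OF region_Int[OF region_far_colour pw] region_Int[OF region_spare pw]]
        measure_far_colour_in[OF v w] measure_spare_in[OF w] by simp
  qed
  moreover have "R - p w = R - (R \<inter> p w)" by blast
  ultimately show ?thesis
    using measure_region_Diff[OF R, of "R \<inter> p w"] region_sets[OF region_Int[OF R pw]] unfolding R_def by simp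
qed

lemma region_adjacent_colour: "w \<in> W \<Longrightarrow> region (adjacent_colour w v)"
  unfolding adjacent_colour_def using region_far_colour region_spare region_exported
    region_sets[OF precoloring_region] by (intro region_Un region_Diff) auto

text \<open>A neighbour of w receives measure (1 + \<epsilon>)(1 - 1/m) + \<epsilon>/m = 1 + \<epsilon> - 1/m, which is at least
  one exactly by the hypothesis \<epsilon> \<ge> 1/m.\<close>
lemma measure_adjacent_colour:
  assumes w: "w \<in> W" and wv: "E w v"
  shows "1 \<le> measure lebesgue (adjacent_colour w v)"
proof -
  have v: "v \<in> V" using E_in_V[OF wv] by blast
  have "region ((far_colour v \<union> spare) - p w)"
    using region_far_colour region_spare region_sets[OF precoloring_region[OF w]] by (intro region_Un region_Diff)
  moreover have "((far_colour v \<union> spare) - p w) \<inter> exported w = {}"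
    using exported_disjoint_neighbour[OF w wv] by blast
  ultimately have "measure lebesgue (adjacent_colour w v)
      = measure lebesgue ((far_colour v \<union> spare) - p w) + measure lebesgue (exported w)"
    unfolding adjacent_colour_def using region_exported[OF w] by (intro measure_region_Un)
  then show ?thesis using measure_far_spare_out[OF v w] measure_exported[OF w] eps_large by simp
qed

text \<open>A vertex at distance two from w receives measure one: exchanging preserves the measure of each layer.\<close>
lemma region_distance2_colour: "w \<in> W \<Longrightarrow> region (distance2_colour w v)"
  unfolding distance2_colour_def using finite_classes_at region_exchanged classes_at_Ind
  by (intro region_UN) auto

lemma measure_distance2_colour: "w \<in> W \<Longrightarrow> v \<in> V \<Longrightarrow> measure lebesgue (distance2_colour w v) = 1"
  unfolding distance2_colour_def
  by (rule measure_UN_classes) (auto simp: region_exchanged measure_exchanged exchanged_disjoint classes_at_Ind)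

lemma adjacent_colour_avoids_precolour: "w \<in> W \<Longrightarrow> adjacent_colour w v \<inter> p w = {}"
  unfolding adjacent_colour_def using exported_avoids_precolour by blast

text \<open>The remaining pairs of colour sets of adjacent vertices that can occur are disjoint, since adjacent
  vertices use layers of distinct independent sets.\<close>
lemma far_colour_disjoint:
  assumes "E x y"
  shows "far_colour x \<inter> far_colour y = {}"
proof -
  have "far_colour x \<inter> layer T = {}" if "T \<in> classes_at y" for T
    using far_colour_layer_disjoint classes_at_Ind[OF that] classes_at_adjacent[OF assms _ that] by blast
  then show ?thesis unfolding far_colour_def[of y] by blast
qed

lemma distance2_far_disjoint:
  assumes "w \<in> W" "E x y"
  shows "distance2_colour w x \<inter> far_colour y = {}"
proof -
  have "exchanged w T \<inter> far_colour y = {}" if T: "T \<in> classes_at x" for T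
  proof -
    have "far_colour y \<inter> layer T = {}"
      using far_colour_layer_disjoint classes_at_Ind[OF T] classes_at_adjacent[OF assms(2) T] by blast
    moreover have "compensation w T \<subseteq> spare" using compensation(1)[OF assms(1) classes_at_Ind[OF T]] by blast
    ultimately show ?thesis using exchanged_sub[of w T] far_colour_spare_disjoint[of y] by blast
  qed
  then show ?thesis unfolding distance2_colour_def by blast
qed

lemma distance2_colour_disjoint:
  assumes "w \<in> W" "E x y"
  shows "distance2_colour w x \<inter> distance2_colour w y = {}"
proof -
  have "exchanged w T \<inter> exchanged w T' = {}" if "T \<in> classes_at x" "T' \<in> classes_at y" for T T'
    using exchanged_disjoint[OF assms(1)] classes_at_Ind classes_at_adjacent[OF assms(2)] that by blast
  then show ?thesis unfolding distance2_colour_def by blast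
qed

lemma adjacent_distance2_disjoint:
  assumes w: "w \<in> W" and xy: "E x y"
  shows "adjacent_colour w x \<inter> distance2_colour w y = {}"
proof -
  have "adjacent_colour w x \<inter> exchanged w T' = {}" if T': "T' \<in> classes_at y" for T'
  proof -
    have I': "T' \<in> Ind" using classes_at_Ind[OF T'] .
    have comp: "compensation w T' \<subseteq> spare \<inter> p w" using compensation(1)[OF w I'] .
    have "far_colour x \<inter> layer T' = {}"
      using far_colour_layer_disjoint[OF I'] classes_at_adjacent[OF xy _ T'] by blast
    then have far_part: "((far_colour x \<union> spare) - p w) \<inter> exchanged w T' = {}"
      using exchanged_sub[of w T'] comp far_colour_spare_disjoint layer_spare_disjoint[OF I'] by blast
    have export_part: "export w T \<inter> exchanged w T' = {}" if T: "T \<in> classes_at w" for T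
    proof (cases "T = T'")
      case True
      then show ?thesis using comp export(1)[OF w I'] unfolding exchanged_def by blast
    next
      case False
      then show ?thesis
        using export(1)[OF w classes_at_Ind[OF T]] exchanged_sub[of w T'] comp
          layer_disjoint[OF classes_at_Ind[OF T] I'] layer_spare_disjoint[OF classes_at_Ind[OF T]] by blast
    qed
    show ?thesis unfolding adjacent_colour_def exported_def using far_part export_part by blast
  qed
  then show ?thesis unfolding distance2_colour_def by blast
qed

text \<open>The distance of a vertex to W, capped at three, and its nearest precoloured vertex.\<close>
definition tier :: "'a \<Rightarrow> nat" where
  "tier v = (if v \<in> W then 0 else if \<exists>w\<in>W. walk E 1 w v then 1
     else if \<exists>w\<in>W. walk E 2 w v then 2 else 3)"

definition anchor :: "'a \<Rightarrow> 'a" where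
  "anchor v = (SOME w. w \<in> W \<and> walk E (tier v) w v)"

lemma tier_le_3: "tier v \<le> 3"
  unfolding tier_def by simp

lemma tier_0_iff: "tier v = 0 \<longleftrightarrow> v \<in> W"
  unfolding tier_def by simp

lemma tier_le:
  assumes "w \<in> W" "walk E i w v" "i \<le> 2"
  shows "tier v \<le> i"
proof -
  have "i = 0 \<or> i = 1 \<or> i = 2" using assms(3) by auto
  then show ?thesis using assms(1,2) unfolding tier_def by auto
qed

lemma anchor:
  assumes "tier v \<le> 2"
  shows "anchor v \<in> W" "walk E (tier v) (anchor v) v"
proof -
  have "\<exists>w. w \<in> W \<and> walk E (tier v) w v"
    using assms unfolding tier_def by (auto split: if_split_asm)
  then have "anchor v \<in> W \<and> walk E (tier v) (anchor v) v"
    unfolding anchor_def by (rule someI_ex)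
  then show "anchor v \<in> W" "walk E (tier v) (anchor v) v" by blast+
qed

text \<open>The nearest precoloured vertex is the only one within distance 5 - tier v, because precoloured
  vertices are at distance at least six from each other.\<close>
lemma anchor_unique:
  assumes "w \<in> W" "walk E i w v" "tier v \<le> 2" "i + tier v < 6"
  shows "w = anchor v"
proof -
  have "walk E (tier v) v (anchor v)" using walk_reverse[OF E_sym anchor(2)[OF assms(3)]] .
  then have "walk E (i + tier v) w (anchor v)" using walk_append[OF assms(2)] by blast
  then show ?thesis using W_walk_eq assms(1,4) anchor(1)[OF assms(3)] by blast
qed

definition colour :: "'a \<Rightarrow> real set" where
  "colour v = (if tier v = 0 then p v
     else if tier v = 1 then adjacent_colour (anchor v) v
     else if tier v = 2 then distance2_colour (anchor v) v
     else far_colour v)"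

lemma colour_precoloured: "w \<in> W \<Longrightarrow> colour w = p w"
  unfolding colour_def using tier_0_iff by simp

lemma colour_region_measure:
  assumes v: "v \<in> V"
  shows "region (colour v) \<and> 1 \<le> measure lebesgue (colour v)"
proof -
  consider "tier v = 0" | "tier v = 1" | "tier v = 2" | "tier v = 3" using tier_le_3[of v] by linarith
  then show ?thesis
  proof cases
    case 1
    then have "v \<in> W" using tier_0_iff by blast
    then show ?thesis using precoloring_region measure_precoloring colour_precoloured by simp
  next
    case 2
    then have "anchor v \<in> W" "E (anchor v) v" using anchor[of v] walk_1[of E] by auto
    then show ?thesis using 2 region_adjacent_colour measure_adjacent_colour unfolding colour_def by simp
  next
    case 3
    then have "anchor v \<in> W" using anchor(1)[of v] by simp
    then show ?thesis using 3 region_distance2_colour measure_distance2_colour v unfolding colour_def by simp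
  next
    case 4
    then show ?thesis using region_far_colour measure_far_colour v unfolding colour_def by simp
  qed
qed

lemma anchor_walk_neighbour:
  assumes "tier x \<le> 2" "E x y"
  shows "walk E (tier x + 1) (anchor x) y"
  using walk_append[OF anchor(2)[OF assms(1)], of 1 y] assms(2) walk_1[of E] by simp

text \<open>Adjacent vertices get disjoint colour sets; by symmetry let tier x \<le> tier y.  A precoloured x
  is the nearest precoloured vertex of its neighbour y.\<close>
lemma colour_disjoint_tier_0:
  assumes xy: "E x y" and tx: "tier x = 0"
  shows "colour x \<inter> colour y = {}"
proof -
  have x: "x \<in> W" using tx tier_0_iff by blast
  have walk_xy: "walk E 1 x y" using xy walk_1[of E] by simp
  have "tier y \<noteq> 0"
  proof
    assume "tier y = 0"
    then have "y \<in> W" using tier_0_iff by blast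
    then show False using W_walk_eq[OF x _ walk_xy] xy E_irrefl by auto
  qed
  then have ty: "tier y = 1" using tier_le[OF x walk_xy] by simp
  then have "x = anchor y" using anchor_unique[OF x walk_xy] by simp
  then have "colour y = adjacent_colour x y" using ty unfolding colour_def by simp
  then show ?thesis using adjacent_colour_avoids_precolour[OF x] colour_precoloured[OF x] by blast
qed

text \<open>Two adjacent neighbours of W would share their nearest precoloured vertex and form a triangle,
  which k < 3 forbids; a neighbour of a at distance two from W has anchor a as well.\<close>
lemma colour_disjoint_tier_1:
  assumes xy: "E x y" and tx: "tier x = 1" and le: "tier x \<le> tier y"
  shows "colour x \<inter> colour y = {}"
proof -
  define a where "a = anchor x"
  have a: "a \<in> W" "walk E (tier x + 1) a y"
    using anchor(1)[of x] anchor_walk_neighbour[OF _ xy] tx unfolding a_def by simp_all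
  have ty: "tier y \<le> 2" "1 \<le> tier y" using tier_le[OF a] le tx by simp_all
  have ay: "a = anchor y" using anchor_unique[OF a ty(1)] ty(1) tx by linarith
  have colour_x: "colour x = adjacent_colour a x" using tx unfolding colour_def a_def by simp
  show ?thesis
  proof (cases "tier y = 1")
    case True
    have "E a x" using anchor(2)[of x] tx walk_1[of E] unfolding a_def by simp
    moreover have "E a y" using anchor(2)[of y] True ay walk_1[of E] by simp
    moreover have "a \<in> V" "x \<in> V" "y \<in> V" using W_sub a(1) E_in_V[OF xy] by auto
    ultimately show ?thesis using fractional_coloring_triangle_free[OF coloring k_less_3] xy by blast
  next
    case False
    then have "colour y = distance2_colour a y" using ty ay unfolding colour_def by simp
    then show ?thesis using colour_x adjacent_distance2_disjoint[OF a(1) xy] by simp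
  qed
qed

text \<open>A vertex at distance two from W and its neighbour y: either y has the same anchor (the two
  anchors are joined by a walk of length five) or y is far from W.\<close>
lemma colour_disjoint_tier_2:
  assumes xy: "E x y" and tx: "tier x = 2" and le: "tier x \<le> tier y"
  shows "colour x \<inter> colour y = {}"
proof -
  define a where "a = anchor x"
  have a: "a \<in> W" "walk E (tier x + 1) a y"
    using anchor(1)[of x] anchor_walk_neighbour[OF _ xy] tx unfolding a_def by simp_all
  have colour_x: "colour x = distance2_colour a x" using tx unfolding colour_def a_def by simp
  show ?thesis
  proof (cases "tier y = 2")
    case True
    then have "a = anchor y" using anchor_unique[OF a] tx by simp
    then have "colour y = distance2_colour a y" using True unfolding colour_def by simp
    then show ?thesis using colour_x distance2_colour_disjoint[OF a(1) xy] by simp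
  next
    case False
    then have "colour y = far_colour y" using le tx unfolding colour_def by simp
    then show ?thesis using colour_x distance2_far_disjoint[OF a(1) xy] by simp
  qed
qed

lemma colour_disjoint_ordered:
  assumes xy: "E x y" and le: "tier x \<le> tier y"
  shows "colour x \<inter> colour y = {}"
proof -
  consider "tier x = 0" | "tier x = 1" | "tier x = 2" | "tier x = 3" using tier_le_3[of x] by linarith
  then show ?thesis
  proof cases
    case 4
    then have "tier y = 3" using le tier_le_3[of y] by simp
    then show ?thesis using far_colour_disjoint[OF xy] 4 unfolding colour_def by simp
  qed (use colour_disjoint_tier_0 colour_disjoint_tier_1 colour_disjoint_tier_2 xy le in blast)+
qed

lemma colour_disjoint: "E x y \<Longrightarrow> colour x \<inter> colour y = {}"
  using colour_disjoint_ordered[of x y] colour_disjoint_ordered[OF E_sym, of x y] by (cases "tier x \<le> tier y") auto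

theorem extension: "precoloring_extends V E m W p"
proof -
  have "\<forall>v\<in>V. colour v \<in> sets lebesgue \<and> colour v \<subseteq> {0..<m} \<and> 1 \<le> measure lebesgue (colour v)"
    using colour_region_measure unfolding region_def by blast
  moreover have "\<forall>u v. E u v \<longrightarrow> colour u \<inter> colour v = {}" using colour_disjoint by blast
  ultimately have "\<exists>g. fractional_coloring V E m g \<and> (\<forall>v\<in>V. measure lebesgue (colour v) = 1 \<longrightarrow> g v = colour v)"
    by (rule fractional_coloring_within)
  then obtain g where g: "fractional_coloring V E m g" "\<forall>v\<in>V. measure lebesgue (colour v) = 1 \<longrightarrow> g v = colour v"
    by blast
  have "\<forall>w\<in>W. g w = p w" using g(2) W_sub colour_precoloured measure_precoloring by auto
  then show ?thesis unfolding precoloring_extends_def using g(1) by blast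
qed

end

theorem mainTheorem12:
  fixes V :: "'a set" and E :: "'a \<Rightarrow> 'a \<Rightarrow> bool" and W :: "'a set"
    and k \<epsilon> :: real and p :: "'a \<Rightarrow> real set"
  assumes "k \<in> \<rat>" and "0 < k" and "k < 3"
    and "0 < \<epsilon>" and "\<epsilon> \<ge> 1 / (k + \<epsilon>)"
    and "graph V E"
    and "fractionally_colorable V E k"
    and "W \<subseteq> V"
    and "\<forall>u\<in>W. \<forall>v\<in>W. u \<noteq> v \<longrightarrow> dist_ge E 6 u v"
    and "fractional_precoloring W (k + \<epsilon>) p"
  shows "precoloring_extends V E (k + \<epsilon>) W p"
proof -
  obtain f where "fractional_coloring V E k f"
    using assms(7) unfolding fractionally_colorable_def by blast
  then interpret precoloring_extension V E W k \<epsilon> p f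
    using assms by unfold_locales auto
  show ?thesis by (rule extension)
qed

end
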